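(* Under the hypotheses of the construction below, if in addition $p>3$, then $\{M^sT^t\mathbf{1}_D\}_{s,t\in\mathbb{Z}/d\mathbb{Z}}$ is an $(a,c_1,c_2)$-projective $2$-design for $\mathbb{F}_{q^2}^d$ with $a=2$, $c_1=2d$ and $c_2=6$. Construction: $p$ prime, $k\ge1$, $r$ a prime power with $p\mid r-1$ and $r^2+r+1\mid p^k+1$; $q=p^k$, $d=r^2+r+1$; $D\subseteq\mathbb{Z}/d\mathbb{Z}$ is the Singer difference set; $\alpha$ is a primitive element of $\mathbb{F}_{q^2}^\times$, $\omega=\alpha^{(q^2-1)/d}$; $(Tf)(x)=f(x-1)$, $(Mf)(x)=\omega^xf(x)$ for $f:\mathbb{Z}/d\mathbb{Z}\to\mathbb{F}_{q^2}$.
   Context: Vectors in $\mathbb{F}_{q^2}^d$ are identified with functions $\mathbb{Z}/d\mathbb{Z}\to\mathbb{F}_{q^2}$; $\mathbf{1}_D$ is the indicator of $D$. The Singer difference set is a cyclic difference set with parameters $(r^2+r+1,r+1,1)$: $|D|=r+1$ and every nonzero element of $\mathbb{Z}/d\mathbb{Z}$ is uniquely $x-y$ with $x,y\in D$. For $a\in\mathbb{F}_{q^2}$, $\overline{a}=a^q$; $A^*$ is conjugate transpose; $\langle x,y\rangle=x^*y$ on $\mathbb{F}_{q^2}^d$ and analogously on $(\mathbb{F}_{q^2}^d)^{\otimes2}$. For a nondegenerate subspace $V$ ($V\cap V^\perp=\{0\}$), $\{y_j\}$ in $V$ is a $c$-tight frame for $V$ if it spans $V$ and $\sum_j\langle y_j,y\rangle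 y_j=cy$ for all $y\in V$. $(\mathbb{F}_{q^2}^d)^{\otimes2}_{\mathrm{sym}}=\{\sum_{i,j}c_{ij}e_i\otimes e_j:c_{ij}=c_{ji}\}$ (nondegenerate for $q$ odd). A family $\{x_k\}$ in $\mathbb{F}_{q^2}^d$ is an $(a,c_1,c_2)$-projective $2$-design if $\langle x_k,x_k\rangle=a$ for all $k$, $\{x_k\}$ is a $c_1$-tight frame for $\mathbb{F}_{q^2}^d$, and $\{x_k\otimes x_k\}$ is a $c_2$-tight frame for $(\mathbb{F}_{q^2}^d)^{\otimes2}_{\mathrm{sym}}$. Integer parameters are read in $\mathbb{F}_q$. *)

theory Defs
  imports "HOL-Computational_Algebra.Primes"
begin

definition cnj :: "nat \<Rightarrow> 'a::field \<Rightarrow> 'a" where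
  "cnj q a = a ^ q"

text \<open>Hermitian form on vectors indexed by a finite coordinate set I
  (vectors vanish outside I): <x,y> = x^* y.\<close>
definition herm :: "nat \<Rightarrow> 'i set \<Rightarrow> ('i \<Rightarrow> 'a::field) \<Rightarrow> ('i \<Rightarrow> 'a) \<Rightarrow> 'a" where
  "herm q I x y = (\<Sum>i\<in>I. cnj q (x i) * y i)"

definition vecs :: "'i set \<Rightarrow> ('i \<Rightarrow> 'a::field) set" where
  "vecs I = {f. \<forall>i. i \<notin> I \<longrightarrow> f i = 0}"

definition tight_frame ::
  "nat \<Rightarrow> 'i set \<Rightarrow> ('i \<Rightarrow> 'a::field) set \<Rightarrow> 'j set \<Rightarrow> ('j \<Rightarrow> 'i \<Rightarrow> 'a) \<Rightarrow> 'a \<Rightarrow> bool" where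
  "tight_frame q I V J y c \<longleftrightarrow>
     (\<forall>j\<in>J. y j \<in> V) \<and>
     (\<forall>v\<in>V. \<exists>co. v = (\<lambda>i. \<Sum>j\<in>J. co j * y j i)) \<and>
     (\<forall>v\<in>V. (\<lambda>i. \<Sum>j\<in>J. herm q I (y j) v * y j i) = (\<lambda>i. c * v i))"

definition sym_tensors :: "nat \<Rightarrow> (nat \<times> nat \<Rightarrow> 'a::field) set" where
  "sym_tensors d = {f \<in> vecs ({..<d} \<times> {..<d}). \<forall>i j. f (i, j) = f (j, i)}"

definition tensor2 :: "(nat \<Rightarrow> 'a::field) \<Rightarrow> (nat \<times> nat \<Rightarrow> 'a)" where
  "tensor2 x = (\<lambda>(i, j). x i * x j)"

definition proj_2design ::
  "nat \<Rightarrow> nat \<Rightarrow> 'j set \<Rightarrow> ('j \<Rightarrow> nat \<Rightarrow> 'a::field) \<Rightarrow> 'a \<Rightarrow> 'a \<Rightarrow> 'a \<Rightarrow> bool" where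
  "proj_2design q d J x a c1 c2 \<longleftrightarrow>
     (\<forall>k\<in>J. herm q {..<d} (x k) (x k) = a) \<and>
     tight_frame q {..<d} (vecs {..<d}) J x c1 \<and>
     tight_frame q ({..<d} \<times> {..<d}) (sym_tensors d) J (\<lambda>k. tensor2 (x k)) c2"

text \<open>Z/dZ represented by {0..<d}; vectors are functions nat => F vanishing off {0..<d}.
  Translation (Tf)(x) = f(x-1), modulation (Mf)(x) = \<omega>^x f(x).\<close>
definition transl :: "nat \<Rightarrow> (nat \<Rightarrow> 'a::field) \<Rightarrow> nat \<Rightarrow> 'a" where
  "transl d f = (\<lambda>x. if x < d then f ((x + d - 1) mod d) else 0)"

definition modul :: "nat \<Rightarrow> 'a::field \<Rightarrow> (nat \<Rightarrow> 'a) \<Rightarrow> nat \<Rightarrow> 'a" where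
  "modul d \<omega> f = (\<lambda>x. if x < d then \<omega> ^ x * f x else 0)"

definition indic :: "nat set \<Rightarrow> nat \<Rightarrow> 'a::field" where
  "indic D x = (if x \<in> D then 1 else 0)"

definition cyclic_diff_set :: "nat \<Rightarrow> nat \<Rightarrow> nat set \<Rightarrow> bool" where
  "cyclic_diff_set v k D \<longleftrightarrow> D \<subseteq> {..<v} \<and> card D = k \<and>
     (\<forall>z\<in>{1..<v}. \<exists>!xy. xy \<in> D \<times> D \<and> (fst xy + v - snd xy) mod v = z)"

definition prime_power :: "nat \<Rightarrow> bool" where
  "prime_power r \<longleftrightarrow> (\<exists>l m. prime (l::nat) \<and> m \<ge> 1 \<and> r = l ^ m)"

end

theory Submission
  imports Defs
begin

text \<open>The vector \<open>M\<^sup>s T\<^sup>t \<one>\<^sub>D\<close> is the indicator of the translate \<open>D + t\<close>, modulated by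
  \<open>x \<mapsto> \<omega>\<^sup>s\<^sup>x\<close>, where \<open>\<omega>\<close> has order \<open>d\<close>. Because \<open>d\<close> divides \<open>q + 1\<close>, conjugation
  inverts \<open>\<omega>\<close>, so in both frame operators the sum over \<open>s\<close> is a character sum that only
  keeps indices congruent mod \<open>d\<close>. For vectors this leaves every point counted once per
  translate of \<open>D\<close> containing it, giving the constant \<open>d |D|\<close>. For symmetric tensors,
  \<open>x\<^sub>1 + x\<^sub>2 \<equiv> a + b\<close> inside a translate of \<open>D\<close> forces \<open>{x\<^sub>1, x\<^sub>2} = {a, b}\<close> (a difference set
  with \<open>\<lambda> = 1\<close> is a Sidon set), and two distinct points lie in exactly one common translate;
  this gives \<open>d |D|\<close> on the diagonal and \<open>2 d\<close> off it. In characteristic \<open>p\<close> with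
  \<open>r \<equiv> 1\<close> we have \<open>|D| = r + 1 = 2\<close> and \<open>d = 3\<close>, so all constants equal \<open>6\<close>, which is
  nonzero since \<open>p > 3\<close>.\<close>

section \<open>Finite fields and roots of unity\<close>

lemma of_nat_card_UNIV_eq_0: "of_nat (card (UNIV :: 'a::{comm_ring_1,finite} set)) = (0::'a)"
proof -
  have "(\<Sum>y::'a\<in>UNIV. y) = (\<Sum>y\<in>UNIV. y + 1)"
    by (rule sum.reindex_bij_witness[of _ "\<lambda>y. y + 1" "\<lambda>y. y - 1"]) auto
  then show ?thesis
    by (simp add: sum.distrib)
qed

lemma CHAR_finite_field:
  assumes "prime p" and "card (UNIV :: 'a::{field,finite} set) = p ^ n"
  shows "CHAR('a) = p"
proof -
  have "prime CHAR('a)"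
    by (intro prime_CHAR_semidom finite_imp_CHAR_pos) simp
  moreover have "CHAR('a) dvd p ^ n"
    using of_nat_card_UNIV_eq_0[where 'a='a] assms(2) of_nat_eq_0_iff_char_dvd by metis
  ultimately show ?thesis
    using assms(1) by (metis prime_dvd_power primes_dvd_imp_eq)
qed

lemma finite_field_power_card_minus_one:
  fixes x :: "'a::{field,finite}"
  assumes "x \<noteq> 0"
  shows "x ^ (card (UNIV :: 'a set) - 1) = 1"
proof -
  have "(\<Prod>y\<in>UNIV-{0}. x * y) = (\<Prod>y\<in>UNIV-{0}. y)"
    by (rule prod.reindex_bij_witness[of _ "\<lambda>y. y / x" "\<lambda>y. x * y"]) (use assms in auto)
  then have "x ^ card (UNIV - {0::'a}) * \<Prod>(UNIV - {0}) = 1 * \<Prod>(UNIV - {0::'a})"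
    by (simp add: prod.distrib)
  then show ?thesis
    by (simp add: card_Diff_singleton)
qed

lemma finite_field_card_minus_one_pos: "card (UNIV :: 'a::{field,finite} set) - 1 > 0"
proof -
  have "card {0, 1::'a} \<le> card (UNIV :: 'a set)"
    by (rule card_mono) auto
  then show ?thesis
    by simp
qed

lemma generator_power_eq_one_iff:
  fixes \<alpha> :: "'a::{field,finite}"
  assumes "\<alpha> \<noteq> 0" and gen: "\<forall>x. x \<noteq> 0 \<longrightarrow> (\<exists>n. x = \<alpha> ^ n)"
  shows "\<alpha> ^ n = 1 \<longleftrightarrow> (card (UNIV :: 'a set) - 1) dvd n"
proof -
  let ?N = "card (UNIV :: 'a set) - 1"
  have \<alpha>N: "\<alpha> ^ ?N = 1"
    using assms(1) by (rule finite_field_power_card_minus_one)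
  have power_mod: "\<alpha> ^ m = \<alpha> ^ (m mod M)" if "\<alpha> ^ M = 1" for m M
  proof -
    have "\<alpha> ^ m = (\<alpha> ^ M) ^ (m div M) * \<alpha> ^ (m mod M)"
      by (simp flip: power_mult power_add)
    then show ?thesis
      using that by simp
  qed
  have "?N dvd n" if "\<alpha> ^ n = 1"
  proof (rule ccontr)
    assume "\<not> ?N dvd n"
    define m where "m = n mod ?N"
    have "\<alpha> ^ m = 1"
      using that power_mod[OF \<alpha>N] by (simp add: m_def)
    have "0 < m" "m < ?N"
      using \<open>\<not> ?N dvd n\<close> finite_field_card_minus_one_pos[where 'a='a]
      by (auto simp: m_def mod_0_imp_dvd intro: gr0I)
    have "UNIV - {0} \<subseteq> (\<lambda>k. \<alpha> ^ k) ` {..<m}"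
    proof
      fix x :: 'a assume "x \<in> UNIV - {0}"
      then obtain k where "x = \<alpha> ^ k"
        using gen by auto
      then have "x = \<alpha> ^ (k mod m)"
        using power_mod[OF \<open>\<alpha> ^ m = 1\<close>] by simp
      then show "x \<in> (\<lambda>k. \<alpha> ^ k) ` {..<m}"
        using \<open>0 < m\<close> by auto
    qed
    then have "card (UNIV - {0::'a}) \<le> card ((\<lambda>k. \<alpha> ^ k) ` {..<m})"
      by (intro card_mono) simp_all
    also have "\<dots> \<le> m"
      using card_image_le[of "{..<m}" "\<lambda>k. \<alpha> ^ k"] by simp
    finally show False
      using \<open>m < ?N\<close> by (simp add: card_Diff_singleton)
  qed
  then show ?thesis
    using \<alpha>N by (auto simp: power_mult)
qed

lemma generator_root_of_unity_order:
  fixes \<alpha> :: "'a::{field,finite}"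
  assumes "\<alpha> \<noteq> 0" and "\<forall>x. x \<noteq> 0 \<longrightarrow> (\<exists>n. x = \<alpha> ^ n)"
    and "d dvd card (UNIV :: 'a set) - 1"
  shows "(\<alpha> ^ ((card (UNIV :: 'a set) - 1) div d)) ^ m = 1 \<longleftrightarrow> d dvd m"
proof -
  define N where "N = card (UNIV :: 'a set) - 1"
  define e where "e = N div d"
  have "N > 0"
    using finite_field_card_minus_one_pos by (simp add: N_def)
  moreover have "N = e * d"
    using assms(3) by (simp add: N_def e_def)
  ultimately have "e > 0"
    by (cases e) auto
  have "(\<alpha> ^ e) ^ m = 1 \<longleftrightarrow> e * d dvd e * m"
    using generator_power_eq_one_iff[OF assms(1,2), of "e * m"] \<open>N = e * d\<close>
    by (simp only: N_def power_mult)
  also have "\<dots> \<longleftrightarrow> d dvd m"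
    using \<open>e > 0\<close> by simp
  finally show ?thesis
    by (simp add: N_def e_def)
qed

lemma sum_powers_root_of_unity:
  fixes \<omega> :: "'a::field"
  assumes order: "\<forall>m. \<omega> ^ m = 1 \<longleftrightarrow> d dvd m"
  shows "(\<Sum>s<d. \<omega> ^ (s * m)) = (if d dvd m then of_nat d else 0)"
proof (cases "d dvd m")
  case True
  then have "\<omega> ^ (s * m) = 1" for s
    using order by (metis power_mult mult.commute power_one)
  with True show ?thesis
    by simp
next
  case False
  then have "\<omega> ^ m \<noteq> 1"
    using order by simp
  moreover have "(\<omega> ^ m) ^ d = 1"
    using order by (simp flip: power_mult)
  ultimately have "(\<Sum>s<d. (\<omega> ^ m) ^ s) = 0"
    by (simp add: geometric_sum)
  with False show ?thesis
    by (simp add: power_mult mult.commute[of _ m])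
qed

lemma dvd_mult_add_iff_mod_eq:
  fixes d q u v :: nat
  assumes "d dvd q + 1"
  shows "d dvd u * q + v \<longleftrightarrow> u mod d = v mod d"
proof -
  have "int d dvd int u * (int q + 1)"
    using assms by (metis dvd_mult int_dvd_int_iff of_nat_1 of_nat_add)
  moreover have "int u * int q + int v = int u * (int q + 1) + (int v - int u)"
    by (simp add: algebra_simps)
  ultimately have "int d dvd int u * int q + int v \<longleftrightarrow> int d dvd int v - int u"
    by (metis dvd_add_right_iff)
  also have "\<dots> \<longleftrightarrow> int v mod int d = int u mod int d"
    by (simp add: mod_eq_dvd_iff)
  finally show ?thesis
    by (metis int_dvd_int_iff of_nat_add of_nat_mult of_nat_eq_iff of_nat_mod)
qed

lemma cnj_power: "cnj q (\<omega> ^ n) = \<omega> ^ (n * q)"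
  by (simp add: cnj_def power_mult)

lemma cnj_zero: "q > 0 \<Longrightarrow> cnj q 0 = 0"
  by (simp add: cnj_def)

lemma cnj_power_mult_self:
  assumes "\<forall>m. \<omega> ^ m = (1::'a::field) \<longleftrightarrow> d dvd m" and "d dvd q + 1"
  shows "cnj q (\<omega> ^ n) * \<omega> ^ n = 1"
  using assms dvd_mult_add_iff_mod_eq[OF assms(2), of n n]
  by (simp add: cnj_power flip: power_add)

section \<open>Translates of a cyclic difference set\<close>

lemma card_preimage_endo:
  assumes "finite A" and "inj_on f A" and "f ` A \<subseteq> A" and "D \<subseteq> A"
  shows "card {x \<in> A. f x \<in> D} = card D"
proof -
  have "f ` A = A"
    using assms(1,3,2) by (rule endo_inj_surj)
  moreover have "f ` {x \<in> A. f x \<in> D} = f ` A \<inter> D"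
    by auto
  ultimately have "f ` {x \<in> A. f x \<in> D} = D"
    using assms(4) by (simp add: Int_absorb1)
  moreover have "inj_on f {x \<in> A. f x \<in> D}"
    using assms(2) by (rule inj_on_subset) blast
  ultimately show ?thesis
    by (metis card_image)
qed

definition cyc_sub :: "nat \<Rightarrow> nat \<Rightarrow> nat \<Rightarrow> nat" where
  "cyc_sub d x t = nat ((int x - int t) mod int d)"

definition cyc_shift :: "nat \<Rightarrow> nat set \<Rightarrow> nat \<Rightarrow> nat set" where
  "cyc_shift d D t = {x. x < d \<and> cyc_sub d x t \<in> D}"

lemma cyc_shift_subset: "cyc_shift d D t \<subseteq> {..<d}"
  by (auto simp: cyc_shift_def)

lemma int_cyc_sub: "d > 0 \<Longrightarrow> int (cyc_sub d x t) = (int x - int t) mod int d"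
  by (simp add: cyc_sub_def)

lemma cyc_sub_less:
  assumes "d > 0"
  shows "cyc_sub d x t < d"
proof -
  have "(int x - int t) mod int d < int d"
    using assms by simp
  then show ?thesis
    using int_cyc_sub[OF assms, of x t] by linarith
qed

lemma eq_if_dvd_diff:
  assumes "x < d" and "y < d" and "int d dvd int x - int y"
  shows "x = y"
  using assms unfolding mod_eq_dvd_iff[symmetric] by (simp flip: of_nat_mod)

lemma cyc_sub_eq_iff:
  assumes "d > 0" and "x < d" and "y < d"
  shows "cyc_sub d x t = cyc_sub d y t \<longleftrightarrow> x = y"
    and "cyc_sub d a x = cyc_sub d a y \<longleftrightarrow> x = y"
proof -
  have "cyc_sub d x t = cyc_sub d y t \<longleftrightarrow> (int x - int t) mod int d = (int y - int t) mod int d"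
    using int_cyc_sub[OF assms(1)] by (metis of_nat_eq_iff)
  also have "\<dots> \<longleftrightarrow> int x mod int d = int y mod int d"
    by (simp add: mod_eq_dvd_iff)
  finally show "cyc_sub d x t = cyc_sub d y t \<longleftrightarrow> x = y"
    using assms by (simp flip: of_nat_mod)
  have "cyc_sub d a x = cyc_sub d a y \<longleftrightarrow> (int a - int x) mod int d = (int a - int y) mod int d"
    using int_cyc_sub[OF assms(1)] by (metis of_nat_eq_iff)
  also have "\<dots> \<longleftrightarrow> int y mod int d = int x mod int d"
    by (simp add: mod_eq_dvd_iff dvd_diff_commute)
  finally show "cyc_sub d a x = cyc_sub d a y \<longleftrightarrow> x = y"
    using assms by (auto simp flip: of_nat_mod)
qed

lemma cyclic_diff_set_subset: "cyclic_diff_set d k D \<Longrightarrow> D \<subseteq> {..<d}"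
  by (simp add: cyclic_diff_set_def)

lemma cyclic_diff_set_ex1_diff:
  assumes ds: "cyclic_diff_set d k D" and "d > 0" and "(c::int) mod int d \<noteq> 0"
  shows "\<exists>!xy. xy \<in> D \<times> D \<and> (int (fst xy) - int (snd xy)) mod int d = c mod int d"
proof -
  define z where "z = nat (c mod int d)"
  have "0 \<le> c mod int d" and "c mod int d < int d"
    using assms(2) by simp_all
  then have "z \<in> {1..<d}"
    using assms(3) unfolding z_def by (auto simp: nat_less_iff Suc_le_eq)
  then have "\<exists>!xy. xy \<in> D \<times> D \<and> (fst xy + d - snd xy) mod d = z"
    using ds by (simp add: cyclic_diff_set_def)
  moreover have "(fst xy + d - snd xy) mod d = z \<longleftrightarrow>
      (int (fst xy) - int (snd xy)) mod int d = c mod int d" if "xy \<in> D \<times> D" for xy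
  proof -
    have "snd xy < d"
      using that ds by (auto simp: cyclic_diff_set_def)
    then have "int ((fst xy + d - snd xy) mod d) = (int (fst xy) - int (snd xy)) mod int d"
      by (simp add: of_nat_mod of_nat_diff mod_add_self2[of "int (fst xy) - int (snd xy)", symmetric]
          algebra_simps)
    then show ?thesis
      using assms(2) by (auto simp: z_def)
  qed
  ultimately show ?thesis
    by (smt (verit))
qed

lemma cyclic_diff_set_diff_unique:
  assumes ds: "cyclic_diff_set d k D" and "d > 0"
    and "x \<in> D" "y \<in> D" "x' \<in> D" "y' \<in> D" and "x \<noteq> y"
    and "(int x - int y) mod int d = (int x' - int y') mod int d"
  shows "x = x' \<and> y = y'"
proof -
  have "(int x - int y) mod int d \<noteq> 0"
    using assms(3,4,7) cyclic_diff_set_subset[OF ds] eq_if_dvd_diff[of x d y]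
    by (auto simp flip: dvd_eq_mod_eq_0)
  then have "\<exists>!xy. xy \<in> D \<times> D \<and> (int (fst xy) - int (snd xy)) mod int d = (int x - int y) mod int d"
    by (rule cyclic_diff_set_ex1_diff[OF ds \<open>d > 0\<close>])
  then show ?thesis
    using assms(3-6,8) by (metis fst_conv snd_conv mem_Sigma_iff)
qed

lemma cyclic_diff_set_sum_unique:
  assumes ds: "cyclic_diff_set d k D" and "d > 0"
    and "x1 \<in> D" "x2 \<in> D" "x3 \<in> D" "x4 \<in> D"
    and sum: "(int x1 + int x2) mod int d = (int x3 + int x4) mod int d"
  shows "(x1 = x3 \<and> x2 = x4) \<or> (x1 = x4 \<and> x2 = x3)"
proof (cases "x1 = x3")
  case True
  then have "int d dvd int x2 - int x4"
    using sum by (simp add: mod_eq_dvd_iff)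
  then show ?thesis
    using True assms(4,6) cyclic_diff_set_subset[OF ds] eq_if_dvd_diff by blast
next
  case False
  have "(int x1 - int x3) mod int d = (int x4 - int x2) mod int d"
    using sum by (simp add: mod_eq_dvd_iff algebra_simps)
  then show ?thesis
    using cyclic_diff_set_diff_unique[OF ds \<open>d > 0\<close> assms(3,5,6,4) False] by simp
qed

lemma card_cyc_shift:
  assumes "d > 0" and "D \<subseteq> {..<d}"
  shows "card (cyc_shift d D t) = card D"
proof -
  have "cyc_shift d D t = {x \<in> {..<d}. cyc_sub d x t \<in> D}"
    by (auto simp: cyc_shift_def)
  also have "card \<dots> = card D"
    using assms by (intro card_preimage_endo) (auto simp: inj_on_def cyc_sub_eq_iff cyc_sub_less)
  finally show ?thesis .
qed

lemma card_cyc_shifts_containing: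
  assumes "d > 0" and "D \<subseteq> {..<d}" and "a < d"
  shows "card {t \<in> {..<d}. a \<in> cyc_shift d D t} = card D"
proof -
  have "{t \<in> {..<d}. a \<in> cyc_shift d D t} = {t \<in> {..<d}. cyc_sub d a t \<in> D}"
    using assms(3) by (auto simp: cyc_shift_def)
  also have "card \<dots> = card D"
    using assms by (intro card_preimage_endo) (auto simp: inj_on_def cyc_sub_eq_iff cyc_sub_less)
  finally show ?thesis .
qed

lemma cyc_sub_add_mod:
  assumes "d > 0"
  shows "(int (cyc_sub d x t) + int (cyc_sub d y t)) mod int d = (int (x + y) - 2 * int t) mod int d"
  using assms by (simp add: int_cyc_sub mod_add_eq algebra_simps)

lemma cyc_sub_diff_mod:
  assumes "d > 0"
  shows "(int (cyc_sub d x t) - int (cyc_sub d y t)) mod int d = (int x - int y) mod int d"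
  using assms by (simp add: int_cyc_sub mod_diff_eq)

lemma cyc_shift_sum_unique:
  assumes ds: "cyclic_diff_set d k D" and "d > 0"
    and "i \<in> cyc_shift d D t" "j \<in> cyc_shift d D t" "a \<in> cyc_shift d D t" "b \<in> cyc_shift d D t"
    and sum: "(i + j) mod d = (a + b) mod d"
  shows "(i = a \<and> j = b) \<or> (i = b \<and> j = a)"
proof -
  have "int (i + j) mod int d = int (a + b) mod int d"
    using sum by (metis of_nat_mod)
  then have "(int (cyc_sub d i t) + int (cyc_sub d j t)) mod int d
      = (int (cyc_sub d a t) + int (cyc_sub d b t)) mod int d"
    unfolding cyc_sub_add_mod[OF \<open>d > 0\<close>] by (rule mod_diff_cong) simp
  then have "(cyc_sub d i t = cyc_sub d a t \<and> cyc_sub d j t = cyc_sub d b t)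
      \<or> (cyc_sub d i t = cyc_sub d b t \<and> cyc_sub d j t = cyc_sub d a t)"
    using assms(3-6) by (intro cyclic_diff_set_sum_unique[OF ds \<open>d > 0\<close>]) (auto simp: cyc_shift_def)
  then show ?thesis
    using assms(3-6) by (auto simp: cyc_shift_def cyc_sub_eq_iff[OF \<open>d > 0\<close>])
qed

lemma cyc_sub_eq_if_diff_mod_eq:
  assumes "d > 0" and "y < d"
    and "(int (cyc_sub d a t) - int y) mod int d = (int a - int b) mod int d"
  shows "cyc_sub d b t = y"
proof -
  have "(int (cyc_sub d a t) - int (cyc_sub d b t)) mod int d = (int (cyc_sub d a t) - int y) mod int d"
    using cyc_sub_diff_mod[OF assms(1), of a t b] assms(3) by simp
  then have "int d dvd int (cyc_sub d b t) - int y"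
    by (simp add: mod_eq_dvd_iff dvd_diff_commute)
  then show ?thesis
    using assms(1,2) cyc_sub_less eq_if_dvd_diff by blast
qed

text \<open>If \<open>x - y \<equiv> a - b\<close> is the unique representation by elements of \<open>D\<close>, then
  \<open>t = a - x\<close> is the only translate of \<open>D\<close> containing both \<open>a\<close> and \<open>b\<close>.\<close>
lemma card_cyc_shifts_containing_pair:
  assumes ds: "cyclic_diff_set d k D" and "d > 0" and "a < d" "b < d" "a \<noteq> b"
  shows "card {t \<in> {..<d}. a \<in> cyc_shift d D t \<and> b \<in> cyc_shift d D t} = 1"
proof -
  have "(int a - int b) mod int d \<noteq> 0"
    using assms(3-5) eq_if_dvd_diff[of a d b] by (auto simp flip: dvd_eq_mod_eq_0)
  then obtain xy where "xy \<in> D \<times> D"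
    and "(int (fst xy) - int (snd xy)) mod int d = (int a - int b) mod int d"
    using cyclic_diff_set_ex1_diff[OF ds \<open>d > 0\<close>] by blast
  then obtain x y where "x \<in> D" "y \<in> D" and xy: "(int x - int y) mod int d = (int a - int b) mod int d"
    by (cases xy) auto
  have "x < d" "y < d"
    using \<open>x \<in> D\<close> \<open>y \<in> D\<close> cyclic_diff_set_subset[OF ds] by auto
  define t0 where "t0 = cyc_sub d a x"
  have "t0 < d"
    using \<open>d > 0\<close> by (simp add: t0_def cyc_sub_less)
  have a_t0: "cyc_sub d a t0 = x"
    using \<open>d > 0\<close> \<open>x < d\<close> by (simp add: t0_def cyc_sub_def mod_diff_right_eq nat_mod_as_int)
  have b_t0: "cyc_sub d b t0 = y"
    by (rule cyc_sub_eq_if_diff_mod_eq[OF \<open>d > 0\<close> \<open>y < d\<close>, of a]) (simp only: a_t0 xy)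
  have "{t \<in> {..<d}. a \<in> cyc_shift d D t \<and> b \<in> cyc_shift d D t} = {t0}"
  proof (intro equalityI subsetI)
    fix t assume t: "t \<in> {t \<in> {..<d}. a \<in> cyc_shift d D t \<and> b \<in> cyc_shift d D t}"
    have "cyc_sub d a t \<noteq> cyc_sub d b t"
      using \<open>d > 0\<close> assms(3-5) by (simp add: cyc_sub_eq_iff)
    moreover have "(int (cyc_sub d a t) - int (cyc_sub d b t)) mod int d = (int x - int y) mod int d"
      using cyc_sub_diff_mod[OF \<open>d > 0\<close>] xy by simp
    moreover have "cyc_sub d a t \<in> D" "cyc_sub d b t \<in> D"
      using t by (simp_all add: cyc_shift_def)
    ultimately have "cyc_sub d a t = cyc_sub d a t0"
      using cyclic_diff_set_diff_unique[OF ds \<open>d > 0\<close> _ _ \<open>x \<in> D\<close> \<open>y \<in> D\<close>] a_t0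
      by blast
    then show "t \<in> {t0}"
      using t \<open>t0 < d\<close> \<open>d > 0\<close> by (simp add: cyc_sub_eq_iff)
  qed (use \<open>t0 < d\<close> a_t0 b_t0 \<open>x \<in> D\<close> \<open>y \<in> D\<close> assms(3,4) in \<open>auto simp: cyc_shift_def\<close>)
  then show ?thesis
    by simp
qed

section \<open>The Gabor system and its frame operators\<close>

lemma transl_apply: "transl d f x = (if x < d then f ((x + d - 1) mod d) else 0)"
  by (simp add: transl_def)

lemma transl_funpow:
  assumes "d > 0" and "f \<in> vecs {..<d}"
  shows "(transl d ^^ t) f x = (if x < d then f (cyc_sub d x t) else 0)"
proof (induction t arbitrary: x)
  case 0
  then show ?case
    using assms by (auto simp: vecs_def cyc_sub_def nat_mod_as_int[symmetric])
next
  case (Suc t)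
  have "cyc_sub d ((x + d - 1) mod d) t = cyc_sub d x (Suc t)"
  proof -
    have "(int ((x + d - 1) mod d) - int t) mod int d = ((int x - int (Suc t)) + int d) mod int d"
      using assms(1) by (simp add: of_nat_mod of_nat_diff mod_diff_left_eq algebra_simps)
    then show ?thesis
      by (simp add: cyc_sub_def)
  qed
  have "(transl d ^^ Suc t) f x = (if x < d then (transl d ^^ t) f ((x + d - 1) mod d) else 0)"
    by (simp add: transl_apply[of d "(transl d ^^ t) f"])
  then show ?case
    using assms(1) \<open>cyc_sub d ((x + d - 1) mod d) t = cyc_sub d x (Suc t)\<close> by (simp add: Suc.IH)
qed

lemma modul_funpow:
  assumes "f \<in> vecs {..<d}"
  shows "(modul d \<omega> ^^ s) f x = (if x < d then \<omega> ^ (s * x) * f x else 0)"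
proof (induction s arbitrary: x)
  case 0
  then show ?case
    using assms by (simp add: vecs_def)
next
  case (Suc s)
  then show ?case
    by (simp add: modul_def power_add mult.assoc)
qed

definition modulated_indicator :: "'a::field \<Rightarrow> 'i set \<Rightarrow> ('i \<Rightarrow> nat) \<Rightarrow> nat \<Rightarrow> 'i \<Rightarrow> 'a" where
  "modulated_indicator \<omega> S \<phi> s x = (if x \<in> S then \<omega> ^ (s * \<phi> x) else 0)"

definition gabor_system :: "nat \<Rightarrow> 'a::field \<Rightarrow> nat set \<Rightarrow> nat \<times> nat \<Rightarrow> nat \<Rightarrow> 'a" where
  "gabor_system d \<omega> D = (\<lambda>(s, t). modulated_indicator \<omega> (cyc_shift d D t) (\<lambda>x. x) s)"

lemma modul_transl_indic_eq_gabor_system: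
  assumes "d > 0" and "D \<subseteq> {..<d}"
  shows "(\<lambda>(s, t). (modul d \<omega> ^^ s) ((transl d ^^ t) (indic D))) = gabor_system d \<omega> D"
proof (intro ext, clarify)
  fix s t x
  have indic: "(indic D :: nat \<Rightarrow> 'a) \<in> vecs {..<d}"
    using assms(2) by (auto simp: vecs_def indic_def)
  moreover have "(transl d ^^ t) (indic D :: nat \<Rightarrow> 'a) \<in> vecs {..<d}"
    using transl_funpow[OF assms(1) indic] by (simp add: vecs_def)
  ultimately show "(modul d \<omega> ^^ s) ((transl d ^^ t) (indic D)) x = gabor_system d \<omega> D (s, t) x"
    using assms(1) by (simp add: modul_funpow transl_funpow gabor_system_def
        modulated_indicator_def cyc_shift_def indic_def)
qed

lemma tensor2_modulated_indicator:
  "tensor2 (modulated_indicator \<omega> S (\<lambda>x. x) s) = modulated_indicator \<omega> (S \<times> S) (\<lambda>(i, j). i + j) s"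
  by (auto simp: tensor2_def modulated_indicator_def distrib_left power_add)

lemma herm_modulated_indicator_self:
  assumes "\<forall>m. \<omega> ^ m = (1::'a::field) \<longleftrightarrow> d dvd m" and "d dvd q + 1" and "S \<subseteq> I" and "finite I"
  shows "herm q I (modulated_indicator \<omega> S \<phi> s) (modulated_indicator \<omega> S \<phi> s) = of_nat (card S)"
proof -
  have "herm q I (modulated_indicator \<omega> S \<phi> s) (modulated_indicator \<omega> S \<phi> s) = (\<Sum>x\<in>I. if x \<in> S then 1 else 0)"
    unfolding herm_def modulated_indicator_def
    by (intro sum.cong) (simp_all add: cnj_power_mult_self[OF assms(1,2)])
  also have "\<dots> = of_nat (card S)"
    using assms(3,4) by (simp add: sum.If_cases Int_absorb1)
  finally show ?thesis .
qed

text \<open>Since \<open>d\<close> divides \<open>q + 1\<close>, conjugation inverts \<open>\<omega>\<close>, so the sum over the modulations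
  is a character sum detecting \<open>\<phi> x \<equiv> \<phi> y (mod d)\<close>.\<close>
lemma sum_modulations_frame_operator:
  fixes \<omega> :: "'a::field" and v :: "'i \<Rightarrow> 'a"
  assumes order: "\<forall>m. \<omega> ^ m = 1 \<longleftrightarrow> d dvd m" and "d dvd q + 1" and "finite I" and "q > 0"
  shows "(\<Sum>s<d. herm q I (modulated_indicator \<omega> S \<phi> s) v * modulated_indicator \<omega> S \<phi> s y)
    = (if y \<in> S then of_nat d * (\<Sum>x \<in> {x \<in> I \<inter> S. \<phi> x mod d = \<phi> y mod d}. v x) else 0)"
proof -
  have character_sum: "(\<Sum>s<d. \<omega> ^ (s * (\<phi> x * q + \<phi> y))) = (if \<phi> x mod d = \<phi> y mod d then of_nat d else 0)" for x
    using sum_powers_root_of_unity[OF order] dvd_mult_add_iff_mod_eq[OF assms(2)] by simp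
  have "herm q I (modulated_indicator \<omega> S \<phi> s) v * modulated_indicator \<omega> S \<phi> s y
      = (\<Sum>x\<in>I. (if x \<in> S \<and> y \<in> S then v x else 0) * \<omega> ^ (s * (\<phi> x * q + \<phi> y)))" for s
    unfolding herm_def modulated_indicator_def sum_distrib_right
    using \<open>q > 0\<close> by (intro sum.cong) (auto simp: cnj_power cnj_zero distrib_left power_add mult_ac)
  then have "(\<Sum>s<d. herm q I (modulated_indicator \<omega> S \<phi> s) v * modulated_indicator \<omega> S \<phi> s y)
      = (\<Sum>x\<in>I. (if x \<in> S \<and> y \<in> S then v x else 0) * (\<Sum>s<d. \<omega> ^ (s * (\<phi> x * q + \<phi> y))))"
    by (simp add: sum.swap[of _ "{..<d}"] sum_distrib_left)
  also have "\<dots> = (\<Sum>x\<in>I. if y \<in> S \<and> x \<in> S \<and> \<phi> x mod d = \<phi> y mod d then of_nat d * v x else 0)"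
    by (intro sum.cong) (auto simp: character_sum)
  also have "\<dots> = (if y \<in> S then of_nat d * (\<Sum>x \<in> {x \<in> I \<inter> S. \<phi> x mod d = \<phi> y mod d}. v x) else 0)"
    using assms(3) by (simp add: sum.inter_filter[symmetric] sum_distrib_left Int_def conj_ac)
  finally show ?thesis .
qed

lemma tight_frameI:
  fixes c :: "'a::field"
  assumes "\<forall>j\<in>J. y j \<in> V"
    and frame: "\<forall>v\<in>V. (\<lambda>i. \<Sum>j\<in>J. herm q I (y j) v * y j i) = (\<lambda>i. c * v i)"
    and "c \<noteq> 0"
  shows "tight_frame q I V J y c"
  unfolding tight_frame_def
proof (intro conjI ballI)
  fix v assume "v \<in> V"
  then have "v i = (\<Sum>j\<in>J. herm q I (y j) v / c * y j i)" for i
    using frame \<open>c \<noteq> 0\<close> by (simp add: fun_eq_iff sum_divide_distrib[symmetric])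
  then show "\<exists>co. v = (\<lambda>i. \<Sum>j\<in>J. co j * y j i)"
    by (intro exI[of _ "\<lambda>j. herm q I (y j) v / c"] ext) simp
qed (use assms in auto)

lemma sum_gabor_system:
  "(\<Sum>st\<in>{..<d} \<times> {..<d}. F (gabor_system d \<omega> D st))
    = (\<Sum>t<d. \<Sum>s<d. F (modulated_indicator \<omega> (cyc_shift d D t) (\<lambda>x. x) s))"
  unfolding sum.cartesian_product' by (subst sum.swap) (simp add: gabor_system_def)

lemma gabor_system_frame_operator:
  fixes \<omega> :: "'a::field"
  assumes ds: "cyclic_diff_set d k D" and "d > 0" and "q > 0"
    and order: "\<forall>m. \<omega> ^ m = 1 \<longleftrightarrow> d dvd m" and dq: "d dvd q + 1" and v: "v \<in> vecs {..<d}"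
  shows "(\<Sum>st\<in>{..<d} \<times> {..<d}. herm q {..<d} (gabor_system d \<omega> D st) v * gabor_system d \<omega> D st j)
    = of_nat d * of_nat (card D) * v j"
proof (cases "j < d")
  case True
  have "{x \<in> {..<d} \<inter> cyc_shift d D t. x mod d = j mod d} = {j}" if "j \<in> cyc_shift d D t" for t
    using that True by (auto simp: cyc_shift_def)
  then have shift_t: "(\<Sum>s<d. herm q {..<d} (modulated_indicator \<omega> (cyc_shift d D t) (\<lambda>x. x) s) v
      * modulated_indicator \<omega> (cyc_shift d D t) (\<lambda>x. x) s j)
    = (if j \<in> cyc_shift d D t then of_nat d * v j else 0)" for t
    by (simp add: sum_modulations_frame_operator[OF order dq _ \<open>q > 0\<close>])
  have "(\<Sum>st\<in>{..<d} \<times> {..<d}. herm q {..<d} (gabor_system d \<omega> D st) v * gabor_system d \<omega> D st j)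
      = (\<Sum>t<d. if j \<in> cyc_shift d D t then of_nat d * v j else 0)"
    by (simp only: sum_gabor_system[where F = "\<lambda>g. herm q {..<d} g v * g j"] shift_t)
  also have "\<dots> = of_nat (card {t \<in> {..<d}. j \<in> cyc_shift d D t}) * (of_nat d * v j)"
    by (simp add: sum.If_cases Int_def)
  also have "\<dots> = of_nat d * of_nat (card D) * v j"
    using card_cyc_shifts_containing[OF \<open>d > 0\<close> cyclic_diff_set_subset[OF ds] True] by simp
  finally show ?thesis .
next
  case False
  then show ?thesis
    using v by (simp add: vecs_def gabor_system_def modulated_indicator_def cyc_shift_def case_prod_beta)
qed

lemma sum_sym_tensor_same_sum_in_cyc_shift:
  assumes ds: "cyclic_diff_set d k D" and "d > 0" and V: "V \<in> sym_tensors d"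
    and "a \<in> cyc_shift d D t" "b \<in> cyc_shift d D t"
  shows "(\<Sum>ij \<in> {ij \<in> ({..<d} \<times> {..<d}) \<inter> (cyc_shift d D t \<times> cyc_shift d D t).
      (case ij of (i, j) \<Rightarrow> i + j) mod d = (a + b) mod d}. V ij) = (if a = b then 1 else 2) * V (a, b)"
proof -
  have "{ij \<in> ({..<d} \<times> {..<d}) \<inter> (cyc_shift d D t \<times> cyc_shift d D t).
      (case ij of (i, j) \<Rightarrow> i + j) mod d = (a + b) mod d} = {(a, b), (b, a)}"
    using cyc_shift_sum_unique[OF ds \<open>d > 0\<close> _ _ assms(4,5)] assms(4,5)
    by (auto simp: add.commute cyc_shift_def)
  moreover have "V (b, a) = V (a, b)"
    using V by (simp add: sym_tensors_def)
  ultimately show ?thesis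
    by simp
qed

lemma gabor_system_tensor_frame_operator:
  fixes \<omega> :: "'a::field"
  assumes ds: "cyclic_diff_set d k D" and "d > 0" and "q > 0"
    and order: "\<forall>m. \<omega> ^ m = 1 \<longleftrightarrow> d dvd m" and dq: "d dvd q + 1" and V: "V \<in> sym_tensors d"
  shows "(\<Sum>st\<in>{..<d} \<times> {..<d}. herm q ({..<d} \<times> {..<d}) (tensor2 (gabor_system d \<omega> D st)) V
      * tensor2 (gabor_system d \<omega> D st) (a, b))
    = (if a = b then of_nat (card D) else 2) * of_nat d * V (a, b)"
proof (cases "a < d \<and> b < d")
  case True
  define c :: 'a where "c = (if a = b then 1 else 2) * V (a, b)"
  have "(\<Sum>ij \<in> {ij \<in> ({..<d} \<times> {..<d}) \<inter> (cyc_shift d D t \<times> cyc_shift d D t).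
      (case ij of (i, j) \<Rightarrow> i + j) mod d = (a + b) mod d}. V ij) = c"
    if "a \<in> cyc_shift d D t" "b \<in> cyc_shift d D t" for t
    using sum_sym_tensor_same_sum_in_cyc_shift[OF ds \<open>d > 0\<close> V that] by (simp add: c_def)
  then have shift_t: "(\<Sum>s<d. herm q ({..<d} \<times> {..<d}) (tensor2 (modulated_indicator \<omega> (cyc_shift d D t) (\<lambda>x. x) s)) V
      * tensor2 (modulated_indicator \<omega> (cyc_shift d D t) (\<lambda>x. x) s) (a, b))
    = (if a \<in> cyc_shift d D t \<and> b \<in> cyc_shift d D t then of_nat d * c else 0)" for t
    by (simp add: tensor2_modulated_indicator sum_modulations_frame_operator[OF order dq _ \<open>q > 0\<close>])
  have "(\<Sum>st\<in>{..<d} \<times> {..<d}. herm q ({..<d} \<times> {..<d}) (tensor2 (gabor_system d \<omega> D st)) V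
      * tensor2 (gabor_system d \<omega> D st) (a, b))
    = (\<Sum>t<d. if a \<in> cyc_shift d D t \<and> b \<in> cyc_shift d D t then of_nat d * c else 0)"
    by (simp only: sum_gabor_system[where F = "\<lambda>g. herm q ({..<d} \<times> {..<d}) (tensor2 g) V * tensor2 g (a, b)"] shift_t)
  also have "\<dots> = of_nat (card {t \<in> {..<d}. a \<in> cyc_shift d D t \<and> b \<in> cyc_shift d D t}) * (of_nat d * c)"
    by (simp add: sum.If_cases Int_def)
  also have "\<dots> = (if a = b then of_nat (card D) else 2) * of_nat d * V (a, b)"
    using card_cyc_shifts_containing[OF \<open>d > 0\<close> cyclic_diff_set_subset[OF ds]]
      card_cyc_shifts_containing_pair[OF ds \<open>d > 0\<close>] True
    by (simp add: c_def)
  finally show ?thesis .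
next
  case False
  then show ?thesis
    using V by (auto simp: sym_tensors_def vecs_def gabor_system_def modulated_indicator_def
        cyc_shift_def tensor2_def case_prod_beta)
qed

text \<open>The tensor frame operator is \<open>d |D|\<close> on the diagonal and \<open>2 d\<close> off it, so it is
  tight exactly when \<open>|D| = 2\<close> in the field.\<close>
lemma gabor_system_proj_2design:
  fixes \<omega> :: "'a::field"
  assumes ds: "cyclic_diff_set d k D" and "q > 0"
    and order: "\<forall>m. \<omega> ^ m = 1 \<longleftrightarrow> d dvd m" and dq: "d dvd q + 1"
    and k: "of_nat k = (2::'a)" and nonzero: "2 * of_nat d \<noteq> (0::'a)"
  shows "proj_2design q d ({..<d} \<times> {..<d}) (gabor_system d \<omega> D) 2 (2 * of_nat d) (2 * of_nat d)"
proof -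
  have "d > 0"
    using nonzero by (cases d) auto
  have card_D: "of_nat (card D) = (2::'a)"
    using ds k by (simp add: cyclic_diff_set_def)
  have gabor_vec: "gabor_system d \<omega> D st \<in> vecs {..<d}" for st
    by (auto simp: vecs_def gabor_system_def modulated_indicator_def cyc_shift_def case_prod_beta)
  show ?thesis
    unfolding proj_2design_def
  proof (intro conjI ballI tight_frameI ext)
    fix st :: "nat \<times> nat"
    show "herm q {..<d} (gabor_system d \<omega> D st) (gabor_system d \<omega> D st) = 2"
      using herm_modulated_indicator_self[OF order dq cyc_shift_subset]
        card_cyc_shift[OF \<open>d > 0\<close> cyclic_diff_set_subset[OF ds]] card_D
      by (simp add: gabor_system_def case_prod_beta)
  next
    fix v :: "nat \<Rightarrow> 'a" and j assume "v \<in> vecs {..<d}"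
    then show "(\<Sum>st\<in>{..<d} \<times> {..<d}. herm q {..<d} (gabor_system d \<omega> D st) v * gabor_system d \<omega> D st j)
        = 2 * of_nat d * v j"
      using gabor_system_frame_operator[OF ds \<open>d > 0\<close> \<open>q > 0\<close> order dq] card_D by simp
  next
    fix V :: "nat \<times> nat \<Rightarrow> 'a" and ab :: "nat \<times> nat" assume "V \<in> sym_tensors d"
    then show "(\<Sum>st\<in>{..<d} \<times> {..<d}. herm q ({..<d} \<times> {..<d}) (tensor2 (gabor_system d \<omega> D st)) V
        * tensor2 (gabor_system d \<omega> D st) ab) = 2 * of_nat d * V ab"
      using gabor_system_tensor_frame_operator[OF ds \<open>d > 0\<close> \<open>q > 0\<close> order dq] card_D
      by (cases ab) simp
  next
    fix st :: "nat \<times> nat"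
    show "tensor2 (gabor_system d \<omega> D st) \<in> sym_tensors d"
      using gabor_vec[of st] by (auto simp: sym_tensors_def vecs_def tensor2_def)
  qed (use gabor_vec nonzero in auto)
qed

section \<open>The Singer parameters\<close>

lemma prime_power_pos: "prime_power r \<Longrightarrow> r > 0"
  by (auto simp: prime_power_def prime_gt_0_nat)

lemma singer_parameters_mod_CHAR:
  assumes "CHAR('a::comm_ring_1) = p" and "p dvd r - 1" and "r > 0"
  shows "of_nat (r + 1) = (2::'a)" and "of_nat (r^2 + r + 1) = (3::'a)"
proof -
  obtain c where r: "r = p * c + 1"
    using assms(2,3) by (metis dvdE Suc_pred' Suc_eq_plus1)
  have p: "of_nat p = (0::'a)"
    using assms(1) by (simp add: of_nat_eq_0_iff_char_dvd)
  then show "of_nat (r + 1) = (2::'a)"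
    by (simp add: r)
  have "r^2 + r + 1 = p * (c * (r + 2)) + 3"
    by (simp add: r power2_eq_square algebra_simps)
  then show "of_nat (r^2 + r + 1) = (3::'a)"
    using p by simp
qed

lemma six_neq_zero:
  assumes "CHAR('a::comm_ring_1) = p" and "prime p" and "p > 3"
  shows "(6::'a) \<noteq> 0"
proof -
  have "\<not> p dvd 2 * 3"
    using assms(2,3) prime_dvd_mult_nat[of p 2 3] by (auto dest: dvd_imp_le)
  then show ?thesis
    using assms(1) of_nat_eq_0_iff_char_dvd[of 6, where 'a='a] by simp
qed

theorem mainTheorem12:
  fixes p k r q d :: nat and D :: "nat set" and \<alpha> \<omega> :: "'a::{field,finite}"
  assumes "prime p" and "k \<ge> 1" and "p > 3"
    and "prime_power r" and "p dvd r - 1" and "(r^2 + r + 1) dvd (p^k + 1)"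
    and "q = p ^ k" and "d = r^2 + r + 1"
    and "card (UNIV :: 'a set) = q^2"
    and "cyclic_diff_set d (r + 1) D"
    and "\<alpha> \<noteq> 0" and "\<forall>x::'a. x \<noteq> 0 \<longrightarrow> (\<exists>n. x = \<alpha> ^ n)"
    and "\<omega> = \<alpha> ^ ((q^2 - 1) div d)"
  shows "proj_2design q d ({..<d} \<times> {..<d})
           (\<lambda>(s, t). (modul d \<omega> ^^ s) ((transl d ^^ t) (indic D)))
           2 (of_nat (2 * d)) 6"
proof -
  have "q > 0" and dq: "d dvd q + 1"
    using assms(1,6-8) by (simp_all add: prime_gt_0_nat)
  have char: "CHAR('a) = p"
    using assms(1,7,9) by (intro CHAR_finite_field[where n = "k * 2"]) (simp_all add: power_mult)
  have "q^2 - 1 = (q + 1) * (q - 1)"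
    by (simp add: power2_eq_square algebra_simps)
  then have "d dvd card (UNIV :: 'a set) - 1"
    unfolding assms(9) by (simp only: dvd_mult2[OF dq])
  then have order: "\<forall>m. \<omega> ^ m = 1 \<longleftrightarrow> d dvd m"
    using generator_root_of_unity_order[OF assms(11,12)] assms(9,13) by simp
  have "of_nat (r + 1) = (2::'a)" and "2 * of_nat d = (6::'a)"
    using singer_parameters_mod_CHAR[OF char assms(5) prime_power_pos[OF assms(4)]] assms(8) by simp_all
  moreover have "(6::'a) \<noteq> 0"
    using six_neq_zero[OF char assms(1,3)] .
  ultimately have "proj_2design q d ({..<d} \<times> {..<d}) (gabor_system d \<omega> D) 2 (2 * of_nat d) (2 * of_nat d)"
    using gabor_system_proj_2design[OF assms(10) \<open>q > 0\<close> order dq] by simp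
  then show ?thesis
    using modul_transl_indic_eq_gabor_system[of d D \<omega>] cyclic_diff_set_subset[OF assms(10)] assms(8)
      \<open>2 * of_nat d = 6\<close> by simp
qed

end
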